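(* Let $H$ be a graph and $Y$ a minimal blocking set of $H$. Let $H'$ be obtained from $H$ by adding a new vertex $v$ adjacent exactly to the vertices of $Y$. Then $\mathrm{OPT}(H')=\mathrm{OPT}(H)+1$ and $Y\cup\{v\}$ is a minimal blocking set of $H'$.
   Context: $\mathrm{OPT}(G)$ is the minimum vertex cover size. $Y\subseteq V(G)$ is a blocking set of $G$ if no vertex cover of $G$ of size $\mathrm{OPT}(G)$ contains $Y$; minimal if no proper subset is a blocking set. *)

theory Defs
  imports Main
begin

definition graph :: "'a set \<Rightarrow> 'a set set \<Rightarrow> bool" where
  "graph V E \<longleftrightarrow> finite V \<and> (\<forall>e\<in>E. e \<subseteq> V \<and> card e = 2)"

definition vertex_cover :: "'a set \<Rightarrow> 'a set set \<Rightarrow> 'a set \<Rightarrow> bool" where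
  "vertex_cover V E C \<longleftrightarrow> C \<subseteq> V \<and> (\<forall>e\<in>E. e \<inter> C \<noteq> {})"

definition OPT :: "'a set \<Rightarrow> 'a set set \<Rightarrow> nat" where
  "OPT V E = (LEAST k. \<exists>C. vertex_cover V E C \<and> card C = k)"

definition blocking_set :: "'a set \<Rightarrow> 'a set set \<Rightarrow> 'a set \<Rightarrow> bool" where
  "blocking_set V E Y \<longleftrightarrow> Y \<subseteq> V \<and>
     \<not> (\<exists>C. vertex_cover V E C \<and> card C = OPT V E \<and> Y \<subseteq> C)"

definition minimal_blocking_set :: "'a set \<Rightarrow> 'a set set \<Rightarrow> 'a set \<Rightarrow> bool" where
  "minimal_blocking_set V E Y \<longleftrightarrow> blocking_set V E Y \<and>
     (\<forall>Z. Z \<subset> Y \<longrightarrow> \<not> blocking_set V E Z)"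

end

theory Submission
  imports Defs
begin

text \<open>
  Write \<open>k = OPT(H)\<close>. A cover of \<open>H'\<close> either contains \<open>v\<close>, and then removing \<open>v\<close> leaves a
  cover of \<open>H\<close>, or it avoids \<open>v\<close>, and then it contains \<open>Y\<close> and is a cover of \<open>H\<close> through
  the blocking set \<open>Y\<close>, hence of size at least \<open>k + 1\<close>. Adding \<open>v\<close> to an optimal cover of
  \<open>H\<close> shows \<open>OPT(H') = k + 1\<close>. An optimal cover of \<open>H'\<close> containing \<open>Y \<union> {v}\<close> would
  leave, after removing \<open>v\<close>, an optimal cover of \<open>H\<close> containing \<open>Y\<close>. For minimality, a
  proper subset of \<open>Y \<union> {v}\<close> either contains \<open>v\<close>, and extends an optimal cover of \<open>H\<close>
  through a proper subset of \<open>Y\<close> by \<open>v\<close>; or it lies in \<open>Y\<close>, and minimality of \<open>Y\<close> yields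
  a cover of \<open>H\<close> of size \<open>k + 1\<close> containing \<open>Y\<close>, which also covers \<open>H'\<close>.
\<close>

lemma OPT_attained:
  assumes "vertex_cover V E C"
  shows "\<exists>C. vertex_cover V E C \<and> card C = OPT V E"
proof -
  have "\<exists>k C. vertex_cover V E C \<and> card C = k" using assms by blast
  from LeastI_ex[OF this] show ?thesis unfolding OPT_def by blast
qed

lemma OPT_le_card:
  assumes "vertex_cover V E C"
  shows "OPT V E \<le> card C"
  unfolding OPT_def using assms by (blast intro: Least_le)

lemma vertex_cover_finite:
  assumes "finite V" and "vertex_cover V E C"
  shows "finite C"
  using assms finite_subset unfolding vertex_cover_def by blast

lemma graph_vertex_cover_vertices:
  assumes "graph V E"
  shows "vertex_cover V E V"
  unfolding vertex_cover_def
proof (intro conjI ballI)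
  fix e assume "e \<in> E"
  then have "e \<subseteq> V" "card e = 2" using assms unfolding graph_def by auto
  then show "e \<inter> V \<noteq> {}" by (metis Int_absorb2 card.empty zero_neq_numeral)
qed simp

lemma vertex_cover_mono:
  assumes "vertex_cover V E C" and "C \<subseteq> D" and "D \<subseteq> V"
  shows "vertex_cover V E D"
  using assms unfolding vertex_cover_def by blast

lemma blocking_set_card_gt_OPT:
  assumes "blocking_set V E Y" and "vertex_cover V E C" and "Y \<subseteq> C"
  shows "OPT V E < card C"
  using assms OPT_le_card[OF assms(2)] unfolding blocking_set_def by fastforce

lemma not_blocking_setD:
  assumes "\<not> blocking_set V E Y" and "Y \<subseteq> V"
  obtains C where "vertex_cover V E C" "card C = OPT V E" "Y \<subseteq> C"
  using assms unfolding blocking_set_def by blast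

lemma not_blocking_setI:
  assumes "vertex_cover V E C" and "card C = OPT V E" and "Y \<subseteq> C"
  shows "\<not> blocking_set V E Y"
  using assms unfolding blocking_set_def by blast

lemma blocking_set_nonempty:
  assumes "graph V E" and "blocking_set V E Y"
  shows "Y \<noteq> {}"
  using OPT_attained[OF graph_vertex_cover_vertices[OF assms(1)]] assms(2)
  unfolding blocking_set_def by blast

lemma minimal_blocking_set_cover_OPT_Suc:
  assumes "minimal_blocking_set V E Y" and "finite V" and "y \<in> Y"
  obtains C where "vertex_cover V E C" "card C = OPT V E + 1" "Y \<subseteq> C"
proof -
  have blocking: "blocking_set V E Y" and "Y \<subseteq> V"
    using assms(1) unfolding minimal_blocking_set_def blocking_set_def by auto
  have "\<not> blocking_set V E (Y - {y})"
    using assms(1,3) unfolding minimal_blocking_set_def by blast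
  then obtain C where C: "vertex_cover V E C" "card C = OPT V E" "Y - {y} \<subseteq> C"
    using \<open>Y \<subseteq> V\<close> by (elim not_blocking_setD) auto
  have "y \<notin> C"
  proof
    assume "y \<in> C"
    then have "Y \<subseteq> C" using C(3) by blast
    then show False using blocking_set_card_gt_OPT[OF blocking C(1)] C(2) by simp
  qed
  moreover have "finite C" using vertex_cover_finite[OF assms(2) C(1)] .
  ultimately have "card (insert y C) = OPT V E + 1" using C(2) by simp
  moreover have "vertex_cover V E (insert y C)"
    using vertex_cover_mono[OF C(1)] assms(3) \<open>Y \<subseteq> V\<close> C(1)
    unfolding vertex_cover_def by blast
  moreover have "Y \<subseteq> insert y C" using C(3) by blast
  ultimately show ?thesis using that by blast
qed

locale vertex_extension =
  fixes V :: "'a set" and E :: "'a set set" and Y :: "'a set" and v :: 'a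
  assumes graph: "graph V E"
    and attached_subset: "Y \<subseteq> V"
    and new_vertex: "v \<notin> V"
begin

abbreviation "V' \<equiv> insert v V"
abbreviation "E' \<equiv> E \<union> {{v, y} | y. y \<in> Y}"

lemma finite_vertices: "finite V"
  using graph unfolding graph_def by blast

lemma vertex_cover_remove_new:
  assumes "vertex_cover V' E' C"
  shows "vertex_cover V E (C - {v})"
  using assms graph new_vertex unfolding vertex_cover_def graph_def by blast

lemma vertex_cover_insert_new:
  assumes "vertex_cover V E C"
  shows "vertex_cover V' E' (insert v C)"
  using assms unfolding vertex_cover_def by blast

lemma vertex_cover_extend:
  assumes "vertex_cover V E C" and "Y \<subseteq> C"
  shows "vertex_cover V' E' C"
  using assms unfolding vertex_cover_def by blast

lemma attached_subset_vertex_cover: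
  assumes "vertex_cover V' E' C" and "v \<notin> C"
  shows "Y \<subseteq> C"
proof
  fix y assume "y \<in> Y"
  then have "{v, y} \<inter> C \<noteq> {}" using assms(1) unfolding vertex_cover_def by blast
  then show "y \<in> C" using assms(2) by blast
qed

lemma card_insert_new:
  assumes "vertex_cover V E C"
  shows "card (insert v C) = card C + 1"
proof -
  have "v \<notin> C" using assms new_vertex unfolding vertex_cover_def by blast
  then show ?thesis using vertex_cover_finite[OF finite_vertices assms] by simp
qed

lemma card_remove_new:
  assumes "vertex_cover V' E' C" and "v \<in> C"
  shows "card C = card (C - {v}) + 1"
proof -
  have "finite C" using vertex_cover_finite[OF _ assms(1)] finite_vertices by blast
  then show ?thesis using card.remove[of C v] assms(2) by simp
qed

context
  assumes blocking: "blocking_set V E Y"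
begin

lemma OPT_Suc_le_card:
  assumes cover: "vertex_cover V' E' C"
  shows "OPT V E + 1 \<le> card C"
proof (cases "v \<in> C")
  case True
  then show ?thesis
    using card_remove_new[OF cover] OPT_le_card[OF vertex_cover_remove_new[OF cover]] by simp
next
  case False
  then have "vertex_cover V E C" and "Y \<subseteq> C"
    using vertex_cover_remove_new[OF cover] attached_subset_vertex_cover[OF cover] by auto
  then show ?thesis using blocking_set_card_gt_OPT[OF blocking] by fastforce
qed

lemma OPT_extension: "OPT V' E' = OPT V E + 1"
proof -
  obtain C where C: "vertex_cover V E C" "card C = OPT V E"
    using OPT_attained[OF graph_vertex_cover_vertices[OF graph]] by blast
  have "OPT V' E' \<le> OPT V E + 1"
    using OPT_le_card[OF vertex_cover_insert_new[OF C(1)]] card_insert_new[OF C(1)] C(2) by simp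
  moreover obtain C' where "vertex_cover V' E' C'" "card C' = OPT V' E'"
    using OPT_attained[OF vertex_cover_insert_new[OF C(1)]] by blast
  ultimately show ?thesis using OPT_Suc_le_card by fastforce
qed

lemma blocking_set_extension: "blocking_set V' E' (insert v Y)"
  unfolding blocking_set_def
proof (intro conjI notI)
  show "insert v Y \<subseteq> V'" using attached_subset by blast
next
  assume "\<exists>C. vertex_cover V' E' C \<and> card C = OPT V' E' \<and> insert v Y \<subseteq> C"
  then obtain C where C: "vertex_cover V' E' C" "card C = OPT V E + 1" "insert v Y \<subseteq> C"
    using OPT_extension by auto
  have "card (C - {v}) = OPT V E" using card_remove_new[OF C(1)] C(2,3) by simp
  moreover have "Y \<subseteq> C - {v}" using C(3) new_vertex attached_subset by blast
  ultimately show False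
    using blocking_set_card_gt_OPT[OF blocking vertex_cover_remove_new[OF C(1)]] by simp
qed

end

lemma minimal_blocking_set_extension:
  assumes minimal: "minimal_blocking_set V E Y"
  shows "minimal_blocking_set V' E' (insert v Y)"
proof -
  have blocking: "blocking_set V E Y" using minimal unfolding minimal_blocking_set_def by blast
  have "\<not> blocking_set V' E' Z" if proper: "Z \<subset> insert v Y" for Z
  proof (cases "v \<in> Z")
    case True
    then have "Z - {v} \<subset> Y" using proper by blast
    then have "\<not> blocking_set V E (Z - {v})" using minimal unfolding minimal_blocking_set_def by blast
    then obtain C where C: "vertex_cover V E C" "card C = OPT V E" "Z - {v} \<subseteq> C"
      using \<open>Z - {v} \<subset> Y\<close> attached_subset by (elim not_blocking_setD) auto
    show ?thesis
    proof (rule not_blocking_setI)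
      show "vertex_cover V' E' (insert v C)" using vertex_cover_insert_new[OF C(1)] .
      show "card (insert v C) = OPT V' E'"
        using card_insert_new[OF C(1)] C(2) OPT_extension[OF blocking] by simp
      show "Z \<subseteq> insert v C" using C(3) by blast
    qed
  next
    case False
    then have "Z \<subseteq> Y" using proper by blast
    obtain y where "y \<in> Y" using blocking_set_nonempty[OF graph blocking] by blast
    then obtain C where C: "vertex_cover V E C" "card C = OPT V E + 1" "Y \<subseteq> C"
      using minimal_blocking_set_cover_OPT_Suc[OF minimal finite_vertices] by blast
    show ?thesis
      using not_blocking_setI[OF vertex_cover_extend[OF C(1,3)]] C(2,3) \<open>Z \<subseteq> Y\<close>
        OPT_extension[OF blocking] by auto
  qed
  then show ?thesis
    using blocking_set_extension[OF blocking] unfolding minimal_blocking_set_def by blast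
qed

end

theorem mainTheorem14:
  fixes V :: "'a set" and E :: "'a set set" and Y :: "'a set" and v :: 'a
  assumes "graph V E"
    and "minimal_blocking_set V E Y"
    and "v \<notin> V"
  shows "OPT (insert v V) (E \<union> {{v, y} | y. y \<in> Y}) = OPT V E + 1
       \<and> minimal_blocking_set (insert v V) (E \<union> {{v, y} | y. y \<in> Y}) (insert v Y)"
proof -
  have blocking: "blocking_set V E Y" using assms(2) unfolding minimal_blocking_set_def by blast
  then have "Y \<subseteq> V" unfolding blocking_set_def by blast
  then interpret vertex_extension V E Y v using assms(1,3) by unfold_locales
  show ?thesis using OPT_extension[OF blocking] minimal_blocking_set_extension[OF assms(2)] by blast
qed

end
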